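(* Consider the discrete-time control system $x_{k+1}=f(x_k,u_k)$ with reward $r(x,u)=R-x^TQx$ under the standing assumptions (A1)–(A3) in the context. Let $\pi^\star$ be an optimal (feedback) policy for the discounted objective $\mathbf J^{\mathbf u}_\gamma$. Then there exists $\gamma^\star\in(0,1)$ such that for every $\gamma\in(\gamma^\star,1)$ the origin is an asymptotically stable equilibrium of the closed-loop system $x_{n+1}=f(x_n,\pi^\star(x_n))$.
   Context: System: $x_{k+1}=f(x_k,u_k)$, $x_k\in\mathbb R^n$, $u_k\in\mathcal U\subset\mathbb R^m$, origin an equilibrium; $\Psi(k,x_0,\mathbf u(k))$ is the state at time $k$ from $x_0$ under control sequence $\mathbf u$. (A1) $\|f(x,u)-f(y,w)\|\le L_x\|x-y\|+L_u\|u-w\|$. Reward $r(x,u)=R-x^TQx$, $R>0$ constant, $Q$ positive definite. For $\gamma\in(0,1)$: $\mathbf J^{\mathbf u}_\gamma(x_0)=\sum_{k\ge0}\gamma^k r(\Psi(k,x_0,\mathbf u(k)),\mathbf u(k))$, $V_\gamma(x_0)=\sup_{\mathbf u}\mathbf J^{\mathbf u}_\gamma(x_0)$. (A2) For every $x_0$ an optimal control sequence attaining $V_\gamma(x_0)$ exists. (A3) There is $a_V$ with $\frac{R}{1-\gamma}-V_\gamma(x)\le a_V\|x\|^2$ for all $\gamma\in(0,1)$, $x\in\mathbb R^n$. An optimal policy is a map $\pi^\star$ such that the closed-loop inputs $u_k=\pi^\star(x_k)$ attain $V_\gamma(x_0)$ for every $x_0$. Asymptotic stability of the origin for $x_{k+1}=f(x_k,\mathbf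 u(x_k))$: (1) for every $\epsilon>0$ there is $\delta>0$ such that $\|x_0\|<\delta$ implies $x_k$ is defined and $\|x_k\|<\epsilon$ for all $k$; (2) there is $\rho>0$ such that for every $\epsilon>0$ there is $N\in\mathbb N$ with $\|x_k\|<\epsilon$ for all $k\ge N$ whenever $\|x_0\|<\rho$. *)

theory Defs
  imports "HOL-Analysis.Analysis"
begin

fun traj :: "('s \<Rightarrow> 'c \<Rightarrow> 's) \<Rightarrow> 's \<Rightarrow> (nat \<Rightarrow> 'c) \<Rightarrow> nat \<Rightarrow> 's" where
  "traj f x0 u 0 = x0"
| "traj f x0 u (Suc k) = f (traj f x0 u k) (u k)"

fun cl_traj :: "('s \<Rightarrow> 'c \<Rightarrow> 's) \<Rightarrow> ('s \<Rightarrow> 'c) \<Rightarrow> 's \<Rightarrow> nat \<Rightarrow> 's" where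
  "cl_traj f p x0 0 = x0"
| "cl_traj f p x0 (Suc k) = f (cl_traj f p x0 k) (p (cl_traj f p x0 k))"

definition reward :: "real \<Rightarrow> real^'n^'n \<Rightarrow> real^'n \<Rightarrow> real" where
  "reward R Q x = R - x \<bullet> (Q *v x)"

definition admissible :: "'c set \<Rightarrow> (nat \<Rightarrow> 'c) set" where
  "admissible U = {u. \<forall>k. u k \<in> U}"

text \<open>Discounted return J^u_gamma(x0) = sum_k gamma^k r(Psi(k,x0,u), u_k), taken as the
  limit of the partial sums in the extended reals (it exists, possibly -\<infinity>).\<close>
definition J_disc :: "(real^'n \<Rightarrow> 'c \<Rightarrow> real^'n) \<Rightarrow> real \<Rightarrow> real^'n^'n \<Rightarrow> real
    \<Rightarrow> (nat \<Rightarrow> 'c) \<Rightarrow> real^'n \<Rightarrow> ereal" where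
  "J_disc f R Q \<gamma> u x0 =
     lim (\<lambda>N. ereal (\<Sum>k<N. \<gamma> ^ k * reward R Q (traj f x0 u k)))"

definition V_disc :: "(real^'n \<Rightarrow> 'c \<Rightarrow> real^'n) \<Rightarrow> 'c set \<Rightarrow> real \<Rightarrow> real^'n^'n \<Rightarrow> real
    \<Rightarrow> real^'n \<Rightarrow> ereal" where
  "V_disc f U R Q \<gamma> x0 = (SUP u \<in> admissible U. J_disc f R Q \<gamma> u x0)"

definition optimal_policy :: "(real^'n \<Rightarrow> 'c \<Rightarrow> real^'n) \<Rightarrow> 'c set \<Rightarrow> real \<Rightarrow> real^'n^'n \<Rightarrow> real
    \<Rightarrow> (real^'n \<Rightarrow> 'c) \<Rightarrow> bool" where
  "optimal_policy f U R Q \<gamma> p \<longleftrightarrow>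
     (\<forall>x. p x \<in> U) \<and>
     (\<forall>x0. J_disc f R Q \<gamma> (\<lambda>k. p (cl_traj f p x0 k)) x0 = V_disc f U R Q \<gamma> x0)"

definition asym_stable_origin :: "(real^'n \<Rightarrow> 'c \<Rightarrow> real^'n) \<Rightarrow> (real^'n \<Rightarrow> 'c) \<Rightarrow> bool" where
  "asym_stable_origin f p \<longleftrightarrow>
     (\<forall>\<epsilon>>0. \<exists>\<delta>>0. \<forall>x0. norm x0 < \<delta> \<longrightarrow> (\<forall>k. norm (cl_traj f p x0 k) < \<epsilon>)) \<and>
     (\<exists>\<rho>>0. \<forall>\<epsilon>>0. \<exists>N::nat. \<forall>x0. norm x0 < \<rho> \<longrightarrow>
         (\<forall>k\<ge>N. norm (cl_traj f p x0 k) < \<epsilon>))"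

end

theory Submission
  imports Defs
begin

text \<open>
  Write \<open>c x = x \<bullet> (Q *v x)\<close> and let \<open>W x = (\<Sum>k. \<gamma>^k * c x\<^sub>k)\<close> be the discounted cost
  along the optimal closed loop, so that \<open>V\<^sub>\<gamma> = R / (1 - \<gamma>) - W\<close>. Assumption (A3) gives
  \<open>W x \<le> a * \<parallel>x\<parallel>\<^sup>2\<close>, positive definiteness gives \<open>q * \<parallel>x\<parallel>\<^sup>2 \<le> c x\<close>, and the Bellman equation
  \<open>W x = c x + \<gamma> * W x\<^sup>+\<close>, where \<open>x\<^sup>+ = f x (p x)\<close>, then yields \<open>W x\<^sup>+ \<le> (1 - q / a) / \<gamma> * W x\<close>. For \<open>\<gamma> > 1 - q / a\<close>
  this is a strict contraction, so \<open>W\<close> is a quadratic Lyapunov function and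
  \<open>\<parallel>x\<^sub>k\<parallel>\<^sup>2 \<le> a / q * \<rho>^k * \<parallel>x\<^sub>0\<parallel>\<^sup>2\<close> with \<open>\<rho> < 1\<close>. Since an optimal policy is given, no hypothesis
  besides (A3) and the positive definiteness of \<open>Q\<close> is used.
\<close>

lemma quadratic_form_coercive:
  fixes Q :: "real^'n^'n"
  assumes pos_def: "\<forall>x. x \<noteq> 0 \<longrightarrow> x \<bullet> (Q *v x) > 0"
  obtains q where "q > 0" "\<And>x. q * (norm x)\<^sup>2 \<le> x \<bullet> (Q *v x)"
proof -
  have "compact (sphere (0::real^'n) 1)"
    by simp
  moreover have "sphere (0::real^'n) 1 \<noteq> {}"
    using vector_choose_size[of 1] by auto
  moreover have "continuous_on (sphere 0 1) (\<lambda>x::real^'n. x \<bullet> (Q *v x))"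
    by (intro continuous_intros)
  ultimately obtain y where y: "y \<in> sphere 0 1"
    and y_min: "\<forall>z\<in>sphere 0 1. y \<bullet> (Q *v y) \<le> z \<bullet> (Q *v z)"
    using continuous_attains_inf by blast
  have "y \<bullet> (Q *v y) > 0"
    using pos_def y by (metis norm_zero mem_sphere_0 zero_neq_one)
  moreover have "y \<bullet> (Q *v y) * (norm x)\<^sup>2 \<le> x \<bullet> (Q *v x)" for x
  proof (cases "x = 0")
    case False
    define z where "z = (1 / norm x) *\<^sub>R x"
    have x_eq: "x = norm x *\<^sub>R z"
      using False by (simp add: z_def)
    have "z \<in> sphere 0 1"
      using False by (simp add: z_def)
    then have "y \<bullet> (Q *v y) \<le> z \<bullet> (Q *v z)"
      using y_min by blast
    moreover have "x \<bullet> (Q *v x) = (norm x)\<^sup>2 * (z \<bullet> (Q *v z))"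
      by (subst (1 2) x_eq) (simp add: matrix_vector_mult_scaleR power2_eq_square)
    ultimately show ?thesis
      by (metis mult.commute mult_right_mono zero_le_power2)
  qed simp
  ultimately show thesis
    by (rule that)
qed

lemma discounted_return_eq:
  fixes c :: "nat \<Rightarrow> real"
  assumes c_nonneg: "\<And>k. 0 \<le> c k" and "0 \<le> \<gamma>" "\<gamma> < 1"
  shows "lim (\<lambda>N. ereal (\<Sum>k<N. \<gamma>^k * (R - c k)))
           = ereal (R / (1 - \<gamma>)) - (\<Sum>k. ereal (\<gamma>^k * c k))"
proof (rule limI)
  have "(\<lambda>k. \<gamma>^k * R) sums (R / (1 - \<gamma>))"
    using sums_mult2[OF geometric_sums[of \<gamma>]] assms by simp
  then have reward_part: "(\<lambda>N. ereal (\<Sum>k<N. \<gamma>^k * R)) \<longlonglongrightarrow> ereal (R / (1 - \<gamma>))"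
    by (simp add: sums_def)
  have "summable (\<lambda>k. ereal (\<gamma>^k * c k))"
    using assms by (intro summable_ereal_pos) simp
  then have cost_part: "(\<lambda>N. ereal (\<Sum>k<N. \<gamma>^k * c k)) \<longlonglongrightarrow> (\<Sum>k. ereal (\<gamma>^k * c k))"
    using summable_LIMSEQ by fastforce
  have "(\<lambda>N. ereal (\<Sum>k<N. \<gamma>^k * R) - ereal (\<Sum>k<N. \<gamma>^k * c k))
          \<longlonglongrightarrow> ereal (R / (1 - \<gamma>)) - (\<Sum>k. ereal (\<gamma>^k * c k))"
    by (intro tendsto_diff_ereal_general[OF reward_part cost_part]) simp
  then show "(\<lambda>N. ereal (\<Sum>k<N. \<gamma>^k * (R - c k)))
               \<longlonglongrightarrow> ereal (R / (1 - \<gamma>)) - (\<Sum>k. ereal (\<gamma>^k * c k))"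
    by (simp add: right_diff_distrib sum_subtractf)
qed

lemma traj_closed_loop: "traj f x (\<lambda>k. p (cl_traj f p x k)) k = cl_traj f p x k"
  by (induction k) auto

lemma cl_traj_Suc_shift: "cl_traj f p x (Suc k) = cl_traj f p (f x (p x)) k"
  by (induction k) auto

definition cost_to_go :: "(real^'n \<Rightarrow> 'c \<Rightarrow> real^'n) \<Rightarrow> (real^'n \<Rightarrow> 'c) \<Rightarrow> real^'n^'n
    \<Rightarrow> real \<Rightarrow> real^'n \<Rightarrow> real" where
  "cost_to_go f p Q \<gamma> x = (\<Sum>k. \<gamma>^k * (cl_traj f p x k \<bullet> (Q *v cl_traj f p x k)))"

lemma cost_to_go_Bellman:
  assumes "summable (\<lambda>k. \<gamma>^k * (cl_traj f p (f x (p x)) k \<bullet> (Q *v cl_traj f p (f x (p x)) k)))"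
  shows "cost_to_go f p Q \<gamma> x = x \<bullet> (Q *v x) + \<gamma> * cost_to_go f p Q \<gamma> (f x (p x))"
proof -
  let ?y = "cl_traj f p (f x (p x))"
  define c where "c k = \<gamma>^k * (cl_traj f p x k \<bullet> (Q *v cl_traj f p x k))" for k
  have "(\<lambda>k. \<gamma> * (\<gamma>^k * (?y k \<bullet> (Q *v ?y k)))) sums (\<gamma> * cost_to_go f p Q \<gamma> (f x (p x)))"
    using assms unfolding cost_to_go_def by (intro sums_mult summable_sums)
  then have "(\<lambda>k. c (Suc k)) sums (\<gamma> * cost_to_go f p Q \<gamma> (f x (p x)))"
    by (simp only: c_def cl_traj_Suc_shift power_Suc mult.assoc)
  then have "c sums (\<gamma> * cost_to_go f p Q \<gamma> (f x (p x)) + c 0)"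
    by (simp only: sums_Suc_iff)
  then show ?thesis
    by (simp add: cost_to_go_def c_def[abs_def] sums_iff)
qed

lemma optimal_cost_to_go_le:
  assumes opt: "optimal_policy f U R Q \<gamma> p" and "0 \<le> \<gamma>" "\<gamma> < 1"
    and Q_nonneg: "\<And>y. 0 \<le> y \<bullet> (Q *v y)"
    and V_bound: "ereal (R / (1 - \<gamma>)) - V_disc f U R Q \<gamma> x \<le> ereal B"
  shows "summable (\<lambda>k. \<gamma>^k * (cl_traj f p x k \<bullet> (Q *v cl_traj f p x k)))"
    and "cost_to_go f p Q \<gamma> x \<le> B"
proof -
  let ?c = "\<lambda>k. \<gamma>^k * (cl_traj f p x k \<bullet> (Q *v cl_traj f p x k))"
  have c_nonneg: "0 \<le> ?c k" for k
    using \<open>0 \<le> \<gamma>\<close> Q_nonneg by simp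
  have "V_disc f U R Q \<gamma> x = J_disc f R Q \<gamma> (\<lambda>k. p (cl_traj f p x k)) x"
    using opt by (simp add: optimal_policy_def)
  also have "\<dots> = ereal (R / (1 - \<gamma>)) - (\<Sum>k. ereal (?c k))"
    unfolding J_disc_def reward_def traj_closed_loop
    using assms by (intro discounted_return_eq) auto
  finally have "ereal (R / (1 - \<gamma>)) - V_disc f U R Q \<gamma> x = (\<Sum>k. ereal (?c k))"
    using suminf_nonneg[OF summable_ereal_pos, of "\<lambda>k. ereal (?c k)"] c_nonneg
    by (cases "\<Sum>k. ereal (?c k)") simp_all
  with V_bound have sum_le: "(\<Sum>k. ereal (?c k)) \<le> ereal B"
    by simp
  then have sum_finite: "(\<Sum>k. ereal (?c k)) \<noteq> \<infinity>"
    by auto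
  then show "summable ?c"
    using c_nonneg by (intro summable_ereal)
  show "cost_to_go f p Q \<gamma> x \<le> B"
    using sum_le suminf_ereal[OF c_nonneg sum_finite] by (simp add: cost_to_go_def)
qed

lemma quadratic_lyapunov_contraction:
  fixes W c :: "'a::real_normed_vector \<Rightarrow> real"
  assumes "0 < q" "0 < a" "0 < \<gamma>"
    and c_ge: "\<And>x. q * (norm x)\<^sup>2 \<le> c x"
    and W_le: "\<And>x. W x \<le> a * (norm x)\<^sup>2"
    and Bellman: "\<And>x. W x = c x + \<gamma> * W (g x)"
  shows "W (g x) \<le> (1 - q / a) / \<gamma> * W x"
proof -
  have "q / a * W x \<le> q / a * (a * (norm x)\<^sup>2)"
    using W_le[of x] \<open>0 < q\<close> \<open>0 < a\<close> by (intro mult_left_mono) auto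
  also have "\<dots> = q * (norm x)\<^sup>2"
    using \<open>0 < a\<close> by simp
  also have "\<dots> \<le> c x"
    by (rule c_ge)
  finally have "\<gamma> * W (g x) \<le> (1 - q / a) * W x"
    using Bellman[of x] by (simp add: algebra_simps)
  then show ?thesis
    using \<open>0 < \<gamma>\<close> by (simp add: field_simps)
qed

lemma cl_traj_decay:
  fixes W :: "'a \<Rightarrow> real"
  assumes step: "\<And>x. W (f x (p x)) \<le> \<rho> * W x" and "0 \<le> \<rho>"
  shows "W (cl_traj f p x k) \<le> \<rho>^k * W x"
proof (induction k)
  case (Suc k)
  have "W (cl_traj f p x (Suc k)) \<le> \<rho> * W (cl_traj f p x k)"
    using step by simp
  also have "\<dots> \<le> \<rho> * (\<rho>^k * W x)"
    using Suc \<open>0 \<le> \<rho>\<close> by (rule mult_left_mono)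
  finally show ?case
    by simp
qed simp

lemma optimal_policy_exponential_bound:
  assumes opt: "optimal_policy f U R Q \<gamma> p" and "0 < \<gamma>" "\<gamma> < 1"
    and "0 < q" "q \<le> a" and Q_ge: "\<And>x. q * (norm x)\<^sup>2 \<le> x \<bullet> (Q *v x)"
    and V_bound: "\<And>x. ereal (R / (1 - \<gamma>)) - V_disc f U R Q \<gamma> x \<le> ereal (a * (norm x)\<^sup>2)"
  shows "(norm (cl_traj f p x k))\<^sup>2 \<le> a / q * ((1 - q / a) / \<gamma>)^k * (norm x)\<^sup>2"
proof -
  let ?W = "cost_to_go f p Q \<gamma>" and ?\<rho> = "(1 - q / a) / \<gamma>"
  have "0 < a"
    using \<open>0 < q\<close> \<open>q \<le> a\<close> by linarith
  have Q_nonneg: "0 \<le> y \<bullet> (Q *v y)" for y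
    using Q_ge[of y] \<open>0 < q\<close> by (meson order_trans zero_le_mult_iff zero_le_power2 less_imp_le)
  note cost_le = optimal_cost_to_go_le[OF opt less_imp_le[OF \<open>0 < \<gamma>\<close>] \<open>\<gamma> < 1\<close> Q_nonneg V_bound]
  have Bellman: "?W y = y \<bullet> (Q *v y) + \<gamma> * ?W (f y (p y))" for y
    using cost_le(1) by (rule cost_to_go_Bellman)
  have W_nonneg: "0 \<le> ?W y" for y
    unfolding cost_to_go_def using cost_le(1) Q_nonneg \<open>0 < \<gamma>\<close> by (intro suminf_nonneg) auto
  have W_ge: "q * (norm y)\<^sup>2 \<le> ?W y" for y
  proof -
    have "0 \<le> \<gamma> * ?W (f y (p y))"
      using W_nonneg \<open>0 < \<gamma>\<close> by simp
    then show ?thesis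
      using Q_ge[of y] Bellman[of y] by linarith
  qed
  have "?W (f y (p y)) \<le> ?\<rho> * ?W y" for y
    using \<open>0 < q\<close> \<open>0 < a\<close> \<open>0 < \<gamma>\<close> Q_ge cost_le(2) Bellman
    by (rule quadratic_lyapunov_contraction)
  moreover have "0 \<le> ?\<rho>"
    using assms by simp
  ultimately have decay: "?W (cl_traj f p x k) \<le> ?\<rho>^k * ?W x"
    by (rule cl_traj_decay)
  have "q * (norm (cl_traj f p x k))\<^sup>2 \<le> ?W (cl_traj f p x k)"
    by (rule W_ge)
  also have "\<dots> \<le> ?\<rho>^k * ?W x"
    by (rule decay)
  also have "\<dots> \<le> ?\<rho>^k * (a * (norm x)\<^sup>2)"
    using cost_le(2)[of x] \<open>0 \<le> ?\<rho>\<close> by (intro mult_left_mono) auto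
  finally have "q * (norm (cl_traj f p x k))\<^sup>2 \<le> ?\<rho>^k * (a * (norm x)\<^sup>2)" .
  then show ?thesis
    using \<open>0 < q\<close> \<open>0 < \<gamma>\<close> by (simp add: field_simps)
qed

lemma asym_stable_origin_if_exponential_bound:
  fixes f :: "real^'n \<Rightarrow> 'c \<Rightarrow> real^'n"
  assumes "0 < C" "0 \<le> \<rho>" "\<rho> < 1"
    and bound: "\<And>x k. (norm (cl_traj f p x k))\<^sup>2 \<le> C * \<rho>^k * (norm x)\<^sup>2"
  shows "asym_stable_origin f p"
proof -
  have less_eps: "norm (cl_traj f p x k) < \<epsilon>" if "C * \<rho>^k * (norm x)\<^sup>2 < \<epsilon>\<^sup>2" "0 < \<epsilon>"
    for x k and \<epsilon> :: real
    using bound[of x k] that by (intro power2_less_imp_less[of _ \<epsilon>]) auto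
  have stable: "\<exists>\<delta>>0. \<forall>x. norm x < \<delta> \<longrightarrow> (\<forall>k. norm (cl_traj f p x k) < \<epsilon>)" if "0 < \<epsilon>" for \<epsilon>
  proof (intro exI conjI allI impI)
    let ?\<delta> = "sqrt (\<epsilon>\<^sup>2 / C)"
    show "0 < ?\<delta>"
      using \<open>0 < C\<close> \<open>0 < \<epsilon>\<close> by simp
    fix x :: "real^'n" and k assume "norm x < ?\<delta>"
    then have "(norm x)\<^sup>2 < ?\<delta>\<^sup>2"
      by (simp add: power_strict_mono)
    also have "?\<delta>\<^sup>2 = \<epsilon>\<^sup>2 / C"
      using \<open>0 < C\<close> by simp
    finally have "C * (norm x)\<^sup>2 < \<epsilon>\<^sup>2"
      using \<open>0 < C\<close> by (simp add: pos_less_divide_eq mult.commute)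
    moreover have "C * \<rho>^k * (norm x)\<^sup>2 \<le> C * (norm x)\<^sup>2"
      using assms by (intro mult_right_mono mult_left_le power_le_one) auto
    ultimately show "norm (cl_traj f p x k) < \<epsilon>"
      using \<open>0 < \<epsilon>\<close> by (intro less_eps) auto
  qed
  have attractive: "\<exists>N. \<forall>x. norm x < 1 \<longrightarrow> (\<forall>k\<ge>N. norm (cl_traj f p x k) < \<epsilon>)" if "0 < \<epsilon>" for \<epsilon>
  proof -
    obtain N where N: "\<rho>^N < \<epsilon>\<^sup>2 / C"
      using real_arch_pow_inv[of "\<epsilon>\<^sup>2 / C" \<rho>] assms \<open>0 < \<epsilon>\<close> by auto
    show ?thesis
    proof (intro exI allI impI)
      fix x :: "real^'n" and k assume "norm x < 1" "N \<le> k"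
      have "C * \<rho>^k * (norm x)\<^sup>2 \<le> C * \<rho>^N * 1"
        using \<open>norm x < 1\<close> \<open>N \<le> k\<close> assms by (intro mult_mono) (auto simp: power_decreasing power_le_one)
      also have "\<dots> < \<epsilon>\<^sup>2"
        using N \<open>0 < C\<close> by (simp add: pos_less_divide_eq mult.commute)
      finally show "norm (cl_traj f p x k) < \<epsilon>"
        using \<open>0 < \<epsilon>\<close> by (rule less_eps)
    qed
  qed
  show ?thesis
    unfolding asym_stable_origin_def using stable attractive zero_less_one by blast
qed

lemma optimal_policy_asym_stable:
  fixes f :: "real^'n \<Rightarrow> 'c \<Rightarrow> real^'n"
  assumes opt: "optimal_policy f U R Q \<gamma> p" and "1 - q / a < \<gamma>" "\<gamma> < 1"
    and "0 < q" "q \<le> a" and Q_ge: "\<And>x. q * (norm x)\<^sup>2 \<le> x \<bullet> (Q *v x)"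
    and V_bound: "\<And>x. ereal (R / (1 - \<gamma>)) - V_disc f U R Q \<gamma> x \<le> ereal (a * (norm x)\<^sup>2)"
  shows "asym_stable_origin f p"
proof -
  have "q / a \<le> 1"
    using \<open>0 < q\<close> \<open>q \<le> a\<close> by simp
  then have "0 < \<gamma>"
    using \<open>1 - q / a < \<gamma>\<close> by linarith
  show ?thesis
  proof (rule asym_stable_origin_if_exponential_bound)
    show "(norm (cl_traj f p x k))\<^sup>2 \<le> a / q * ((1 - q / a) / \<gamma>)^k * (norm x)\<^sup>2" for x k
      using opt \<open>0 < \<gamma>\<close> \<open>\<gamma> < 1\<close> \<open>0 < q\<close> \<open>q \<le> a\<close> Q_ge V_bound
      by (rule optimal_policy_exponential_bound)
  qed (use assms \<open>0 < \<gamma>\<close> in auto)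
qed

theorem theorem1:
  fixes f :: "real^'n \<Rightarrow> real^'m \<Rightarrow> real^'n"
    and U :: "(real^'m) set"
    and R :: real
    and Q :: "real^'n^'n"
  assumes equilibrium: "0 \<in> U" "f 0 0 = 0"
    and A1: "\<exists>Lx Lu. \<forall>x y u w. u \<in> U \<longrightarrow> w \<in> U \<longrightarrow>
               norm (f x u - f y w) \<le> Lx * norm (x - y) + Lu * norm (u - w)"
    and R_pos: "R > 0"
    and Q_pd: "\<forall>x. x \<noteq> 0 \<longrightarrow> x \<bullet> (Q *v x) > 0"
    and A2: "\<forall>\<gamma>\<in>{0<..<1}. \<forall>x0. \<exists>u\<in>admissible U.
               J_disc f R Q \<gamma> u x0 = V_disc f U R Q \<gamma> x0"
    and A3: "\<exists>aV. \<forall>\<gamma>\<in>{0<..<1}. \<forall>x.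
               ereal (R / (1 - \<gamma>)) - V_disc f U R Q \<gamma> x \<le> ereal (aV * (norm x)\<^sup>2)"
  shows "\<exists>\<gamma>s\<in>{0<..<1}. \<forall>\<gamma>\<in>{\<gamma>s<..<1}. \<forall>p.
           optimal_policy f U R Q \<gamma> p \<longrightarrow> asym_stable_origin f p"
proof -
  obtain q where "0 < q" and Q_ge: "\<And>x. q * (norm x)\<^sup>2 \<le> x \<bullet> (Q *v x)"
    using quadratic_form_coercive[OF Q_pd] by blast
  obtain aV where aV: "\<And>\<gamma> x. \<gamma> \<in> {0<..<1} \<Longrightarrow>
      ereal (R / (1 - \<gamma>)) - V_disc f U R Q \<gamma> x \<le> ereal (aV * (norm x)\<^sup>2)"
    using A3 by blast
  define a where "a = max aV (2 * q)"
  have threshold: "1 - q / a \<in> {0<..<1}"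
    using \<open>0 < q\<close> by (auto simp: a_def field_simps)
  show ?thesis
  proof (rule bexI[OF _ threshold], intro ballI allI impI)
    fix \<gamma> p assume \<gamma>: "\<gamma> \<in> {1 - q / a<..<1}" and opt: "optimal_policy f U R Q \<gamma> p"
    then have "\<gamma> \<in> {0<..<1}"
      using threshold by auto
    have "ereal (R / (1 - \<gamma>)) - V_disc f U R Q \<gamma> x \<le> ereal (a * (norm x)\<^sup>2)" for x
      using aV[OF \<open>\<gamma> \<in> {0<..<1}\<close>, of x] by (elim order_trans) (simp add: a_def mult_right_mono)
    then show "asym_stable_origin f p"
      using opt \<gamma> \<open>0 < q\<close> Q_ge by (intro optimal_policy_asym_stable) (auto simp: a_def)
  qed
qed

end
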